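(* Let $N\ge 2$ and let $X(t)=(X_1(t),\dots,X_N(t))$, $t\ge 0$, be the queue-length process of a system of $N$ parallel queues with infinite buffers, modelled as a continuous-time Markov process on $\mathbb{Z}_+^N$ as follows. Packets arrive at queue $i$ according to a Poisson process of rate $\lambda_i>0$ (independently across queues), and when the system is in state $x=(x_1,\dots,x_N)$, a nonempty queue $i$ (i.e. $x_i>0$) releases a packet at a state-dependent rate $\mu_i(x)$, where the functions $\mu_i:\mathbb{Z}_+^N\to[0,\infty)$ are bounded. Assume the system is homogeneous: $\lambda_1=\dots=\lambda_N$, and the service rates are invariant under permutations of the queues (i.e. $\mu_{\pi(i)}(x_{\pi^{-1}(1)},\dots,x_{\pi^{-1}(N)})=\mu_i(x)$ for every permutation $\pi$ of $\{1,\dots,N\}$). Suppose that there exists an index $i$ such that $$\lambda_i>\limsup_{x_i\to\infty}\ \sup_{x_j:\,j\neq i}\ \mu_i(x).$$ Then, for every initial state $X(0)\in\mathbb{Z}_+^N$, the process is eventually saturated: $\min_{1\le i\le N} X_i(t)>0$ for all sufficiently large $t$ (almost surely), i.e. in the long run every queue has at least one packet pending for transmission.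
   Context: Interpretation: $X_i(t)$ is the number of packets waiting at station $i$ at time $t$ in a random access network; the service rate of a queue may depend on the whole state (e.g. on how many queues are simultaneously nonempty), modelling the coupling between stations contending for a shared channel. The supremum $\sup_{x_j:\,j\neq i}\mu_i(x)$ is taken over all values of the coordinates $x_j$, $j\ne i$, with $x_i$ fixed, and the $\limsup$ is then taken as $x_i\to\infty$. *)

theory Defs
  imports "HOL-Probability.Probability"
begin

text \<open>
  Queues are indexed by a finite type 'n (N = CARD('n)); a state is x :: 'n => nat.
  Events: Inl i = arrival at queue i (rate lam i), Inr i = departure from queue i
  (rate mu i x if x i > 0, else 0).

  The continuous-time Markov chain is realised by the standard competing-exponential-clocks
  construction: at the k-th jump, every event e gets a fresh Exp(1) clock E k e; event e
  fires after time E k e / rate x e; the next event is the one whose clock rings first.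
\<close>

definition ev_rate :: "('n \<Rightarrow> real) \<Rightarrow> ('n \<Rightarrow> ('n \<Rightarrow> nat) \<Rightarrow> real) \<Rightarrow> ('n \<Rightarrow> nat) \<Rightarrow> 'n + 'n \<Rightarrow> real" where
  "ev_rate lam mu x e = (case e of Inl i \<Rightarrow> lam i | Inr i \<Rightarrow> (if 0 < x i then mu i x else 0))"

definition active_events :: "('n \<Rightarrow> real) \<Rightarrow> ('n \<Rightarrow> ('n \<Rightarrow> nat) \<Rightarrow> real) \<Rightarrow> ('n \<Rightarrow> nat) \<Rightarrow> ('n + 'n) set" where
  "active_events lam mu x = {e. 0 < ev_rate lam mu x e}"

definition hold_time :: "('n::finite \<Rightarrow> real) \<Rightarrow> ('n \<Rightarrow> ('n \<Rightarrow> nat) \<Rightarrow> real) \<Rightarrow> ('n \<Rightarrow> nat) \<Rightarrow> ('n + 'n \<Rightarrow> real) \<Rightarrow> real" where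
  "hold_time lam mu x c = Min ((\<lambda>e. c e / ev_rate lam mu x e) ` active_events lam mu x)"

definition fired_event :: "('n::finite \<Rightarrow> real) \<Rightarrow> ('n \<Rightarrow> ('n \<Rightarrow> nat) \<Rightarrow> real) \<Rightarrow> ('n \<Rightarrow> nat) \<Rightarrow> ('n + 'n \<Rightarrow> real) \<Rightarrow> 'n + 'n" where
  "fired_event lam mu x c = (SOME e. e \<in> active_events lam mu x \<and> c e / ev_rate lam mu x e = hold_time lam mu x c)"

definition apply_event :: "('n \<Rightarrow> nat) \<Rightarrow> 'n + 'n \<Rightarrow> ('n \<Rightarrow> nat)" where
  "apply_event x e = (case e of Inl i \<Rightarrow> x(i := x i + 1) | Inr i \<Rightarrow> x(i := x i - 1))"

fun jump_chain :: "('n::finite \<Rightarrow> real) \<Rightarrow> ('n \<Rightarrow> ('n \<Rightarrow> nat) \<Rightarrow> real) \<Rightarrow> ('n \<Rightarrow> nat)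
    \<Rightarrow> (nat \<Rightarrow> 'n + 'n \<Rightarrow> 'a \<Rightarrow> real) \<Rightarrow> nat \<Rightarrow> 'a \<Rightarrow> ('n \<Rightarrow> nat)" where
  "jump_chain lam mu x0 E 0 \<omega> = x0"
| "jump_chain lam mu x0 E (Suc k) \<omega> =
     (let x = jump_chain lam mu x0 E k \<omega> in apply_event x (fired_event lam mu x (\<lambda>e. E k e \<omega>)))"

fun jump_time :: "('n::finite \<Rightarrow> real) \<Rightarrow> ('n \<Rightarrow> ('n \<Rightarrow> nat) \<Rightarrow> real) \<Rightarrow> ('n \<Rightarrow> nat)
    \<Rightarrow> (nat \<Rightarrow> 'n + 'n \<Rightarrow> 'a \<Rightarrow> real) \<Rightarrow> nat \<Rightarrow> 'a \<Rightarrow> real" where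
  "jump_time lam mu x0 E 0 \<omega> = 0"
| "jump_time lam mu x0 E (Suc k) \<omega> =
     jump_time lam mu x0 E k \<omega> + hold_time lam mu (jump_chain lam mu x0 E k \<omega>) (\<lambda>e. E k e \<omega>)"

text \<open>Queue-length process: X(t) = Y k for T k \<le> t < T (k+1).\<close>
definition queue_process :: "('n::finite \<Rightarrow> real) \<Rightarrow> ('n \<Rightarrow> ('n \<Rightarrow> nat) \<Rightarrow> real) \<Rightarrow> ('n \<Rightarrow> nat)
    \<Rightarrow> (nat \<Rightarrow> 'n + 'n \<Rightarrow> 'a \<Rightarrow> real) \<Rightarrow> real \<Rightarrow> 'a \<Rightarrow> ('n \<Rightarrow> nat)" where
  "queue_process lam mu x0 E t \<omega> =
     jump_chain lam mu x0 E (LEAST k. t < jump_time lam mu x0 E (Suc k) \<omega>) \<omega>"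

end

theory Submission
  imports Defs
begin

(*
  By homogeneity, overload of one queue i (its arrival rate
  exceeds the asymptotic supremum of its service rate) transfers to every queue j:
  there are n0 and c < lam j with mu j x <= c whenever x j >= n0.  For such a queue
  the Lyapunov function phi, with geometrically decreasing decrements, is bounded and
  has nonpositive one-step drift along the embedded jump chain; moreover its drift is
  at most a fixed negative amount whenever queue j is empty.  Summing the drift
  inequality shows that the expected number of visits of the jump chain to
  {x j = 0} is finite, so by
  Borel-Cantelli queue j is empty only finitely often, almost surely.  Independently,
  bounded rates make every holding time exceed a fixed amount with a fixed
  probability, which gives E[exp(-T_n)] <= d^n with d < 1 for the jump times, hence T_n -> oo
  almost surely (no explosion).  A sample path argument combines both facts.
*)


section \<open>Exponential clocks\<close>

lemma (in prob_space) nn_integral_indep_var: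
  assumes ind: "indep_var S X T Y"
    and f[measurable]: "f \<in> borel_measurable (S \<Otimes>\<^sub>M T)"
  shows "(\<integral>\<^sup>+\<omega>. f (X \<omega>, Y \<omega>) \<partial>M) = (\<integral>\<^sup>+\<omega>. (\<integral>\<^sup>+\<omega>'. f (X \<omega>, Y \<omega>') \<partial>M) \<partial>M)"
proof -
  have rv: "random_variable S X" "random_variable T Y"
    using ind by (auto dest: indep_var_rv1 indep_var_rv2)
  note [measurable] = rv
  have eq: "distr M S X \<Otimes>\<^sub>M distr M T Y = distr M (S \<Otimes>\<^sub>M T) (\<lambda>x. (X x, Y x))"
    using ind by (simp add: indep_var_distribution_eq)
  interpret PX: prob_space "distr M S X" by (rule prob_space_distr) fact
  interpret PY: prob_space "distr M T Y" by (rule prob_space_distr) fact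
  interpret PXY: pair_prob_space "distr M S X" "distr M T Y" ..
  have "(\<integral>\<^sup>+\<omega>. f (X \<omega>, Y \<omega>) \<partial>M) = integral\<^sup>N (distr M (S \<Otimes>\<^sub>M T) (\<lambda>x. (X x, Y x))) f"
    by (subst nn_integral_distr) auto
  also have "\<dots> = integral\<^sup>N (distr M S X \<Otimes>\<^sub>M distr M T Y) f" by (simp add: eq)
  also have "\<dots> = (\<integral>\<^sup>+ x. \<integral>\<^sup>+ y. f (x, y) \<partial>distr M T Y \<partial>distr M S X)"
    by (subst PY.nn_integral_fst[symmetric]) auto
  also have "\<dots> = (\<integral>\<^sup>+ x. \<integral>\<^sup>+ \<omega>'. f (x, Y \<omega>') \<partial>M \<partial>distr M S X)"
    by (intro nn_integral_cong, subst nn_integral_distr) auto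
  also have "\<dots> = (\<integral>\<^sup>+\<omega>. (\<integral>\<^sup>+\<omega>'. f (X \<omega>, Y \<omega>') \<partial>M) \<partial>M)"
  proof (subst nn_integral_distr)
    show "(\<lambda>x. \<integral>\<^sup>+ \<omega>'. f (x, Y \<omega>') \<partial>M) \<in> borel_measurable (distr M S X)"
      using PY.borel_measurable_nn_integral_fst[of f S]
      by (subst measurable_cong[where g="\<lambda>x. \<integral>\<^sup>+ y. f (x, y) \<partial>distr M T Y"])
         (auto simp: nn_integral_distr)
  qed auto
  finally show ?thesis .
qed

lemma nn_integral_exp_neg:
  assumes "0 < a"
  shows "(\<integral>\<^sup>+x. ennreal (exp (- x * a)) * indicator {0..} x \<partial>lborel) = ennreal (1 / a)"
proof -
  have "(\<integral>\<^sup>+x. ennreal (exponential_density a x) \<partial>lborel) = 1"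
    using prob_space.emeasure_space_1[OF prob_space_exponential_density[OF assms]]
    by (simp add: emeasure_density)
  moreover have "(\<integral>\<^sup>+x. ennreal (exponential_density a x) \<partial>lborel) =
      ennreal a * (\<integral>\<^sup>+x. ennreal (exp (- x * a)) * indicator {0..} x \<partial>lborel)"
    using assms
    by (subst nn_integral_cmult[symmetric])
       (auto intro!: nn_integral_cong simp: exponential_density_def ennreal_mult' split: split_indicator)
  ultimately have total: "ennreal a * (\<integral>\<^sup>+x. ennreal (exp (- x * a)) * indicator {0..} x \<partial>lborel) = 1"
    by simp
  have inv: "ennreal (1/a) * ennreal a = 1"
    using assms by (subst ennreal_mult[symmetric]) auto
  have "(\<integral>\<^sup>+x. ennreal (exp (- x * a)) * indicator {0..} x \<partial>lborel) =
     ennreal (1/a) * (ennreal a * (\<integral>\<^sup>+x. ennreal (exp (- x * a)) * indicator {0..} x \<partial>lborel))"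
    by (simp only: mult.assoc[symmetric] inv mult_1)
  then show ?thesis by (simp only: total mult_1_right)
qed

lemma (in prob_space) exponential_pos_AE:
  assumes D: "distributed M lborel X (exponential_density l)" and l: "0 < l"
  shows "AE \<omega> in M. 0 < X \<omega>"
proof (rule AE_I[where N="{\<omega>\<in>space M. X \<omega> \<le> 0}"])
  have [measurable]: "random_variable borel X"
    using D l by (simp add: exponential_distributed_iff)
  show "{\<omega>\<in>space M. \<not> 0 < X \<omega>} \<subseteq> {\<omega>\<in>space M. X \<omega> \<le> 0}" by auto
  have "prob {\<omega>\<in>space M. X \<omega> \<le> 0} = 0"
    using exponential_distributedD_le[OF D _ l, of 0] by simp
  then show "emeasure M {\<omega>\<in>space M. X \<omega> \<le> 0} = 0"
    by (simp add: emeasure_eq_measure)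
  show "{\<omega>\<in>space M. X \<omega> \<le> 0} \<in> events" by measurable
qed

lemma (in prob_space) exponential_laplace:
  assumes D: "distributed M lborel X (exponential_density l)" and l: "0 < l" and u: "0 \<le> u"
  shows "(\<integral>\<^sup>+\<omega>. ennreal (exp (- X \<omega> * u)) \<partial>M) = ennreal (l / (l + u))"
proof -
  have "(\<integral>\<^sup>+\<omega>. ennreal (exp (- X \<omega> * u)) \<partial>M)
      = (\<integral>\<^sup>+x. ennreal (exponential_density l x) * ennreal (exp (- x * u)) \<partial>lborel)"
    by (rule distributed_nn_integral[OF D, symmetric]) simp
  also have "\<dots> = (\<integral>\<^sup>+x. ennreal l * (ennreal (exp (- x * (l + u))) * indicator {0..} x) \<partial>lborel)"
    using l u
    by (intro nn_integral_cong)
       (auto simp: exponential_density_def ennreal_mult'[symmetric] exp_add[symmetric] algebra_simps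
          split: split_indicator)
  also have "\<dots> = ennreal l * ennreal (1 / (l + u))"
    using l u nn_integral_exp_neg[of "l + u"] by (subst nn_integral_cmult) auto
  also have "\<dots> = ennreal (l / (l + u))"
    using l u by (simp add: ennreal_mult[symmetric])
  finally show ?thesis .
qed

lemma (in prob_space) prob_less_exponential:
  assumes u: "0 < u"
    and DY: "distributed M lborel Y (exponential_density u)"
    and ind: "indep_var borel X borel Y"
    and X_nonneg: "AE \<omega> in M. 0 \<le> X \<omega>"
  shows "emeasure M {\<omega>\<in>space M. X \<omega> < Y \<omega>} = (\<integral>\<^sup>+\<omega>. ennreal (exp (- X \<omega> * u)) \<partial>M)"
proof -
  have [measurable]: "random_variable borel X" "random_variable borel Y"
    using ind by (auto dest: indep_var_rv1 indep_var_rv2)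
  have lt_eq: "emeasure M {\<omega>'\<in>space M. x < Y \<omega>'} =
      (\<integral>\<^sup>+\<omega>'. indicator {p::real\<times>real. fst p < snd p} (x, Y \<omega>') \<partial>M)" for x
  proof -
    have "(\<integral>\<^sup>+\<omega>'. indicator {p::real\<times>real. fst p < snd p} (x, Y \<omega>') \<partial>M)
        = (\<integral>\<^sup>+\<omega>'. indicator {\<omega>'\<in>space M. x < Y \<omega>'} \<omega>' \<partial>M)"
      by (rule nn_integral_cong) (simp split: split_indicator)
    also have "\<dots> = emeasure M {\<omega>'\<in>space M. x < Y \<omega>'}"
      by (rule nn_integral_indicator) measurable
    finally show ?thesis by (rule sym)
  qed
  have "emeasure M {\<omega>\<in>space M. X \<omega> < Y \<omega>} = (\<integral>\<^sup>+\<omega>. indicator {p::real\<times>real. fst p < snd p} (X \<omega>, Y \<omega>) \<partial>M)"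
  proof -
    have "(\<integral>\<^sup>+\<omega>. indicator {p::real\<times>real. fst p < snd p} (X \<omega>, Y \<omega>) \<partial>M) = (\<integral>\<^sup>+\<omega>. indicator {\<omega>\<in>space M. X \<omega> < Y \<omega>} \<omega> \<partial>M)"
      by (rule nn_integral_cong) (simp split: split_indicator)
    also have "\<dots> = emeasure M {\<omega>\<in>space M. X \<omega> < Y \<omega>}"
      by (rule nn_integral_indicator) measurable
    finally show ?thesis by (rule sym)
  qed
  also have "\<dots> = (\<integral>\<^sup>+\<omega>. (\<integral>\<^sup>+\<omega>'. indicator {p::real\<times>real. fst p < snd p} (X \<omega>, Y \<omega>') \<partial>M) \<partial>M)"
    by (rule nn_integral_indep_var[OF ind]) measurable
  also have "\<dots> = (\<integral>\<^sup>+\<omega>. ennreal (exp (- X \<omega> * u)) \<partial>M)"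
  proof (rule nn_integral_cong_AE)
    show "AE \<omega> in M. (\<integral>\<^sup>+\<omega>'. indicator {p::real\<times>real. fst p < snd p} (X \<omega>, Y \<omega>') \<partial>M) = ennreal (exp (- X \<omega> * u))"
      using X_nonneg
    proof eventually_elim
      case (elim \<omega>)
      then show ?case
        using exponential_distributedD_gt[OF DY _ u, of "X \<omega>"]
        by (simp add: lt_eq[symmetric] emeasure_eq_measure)
    qed
  qed
  finally show ?thesis .
qed

lemma (in prob_space) exponential_race:
  assumes l: "0 < l" and u: "0 < u"
    and DX: "distributed M lborel X (exponential_density l)"
    and DY: "distributed M lborel Y (exponential_density u)"
    and ind: "indep_var borel X borel Y"
  shows "emeasure M {\<omega>\<in>space M. X \<omega> < Y \<omega>} = ennreal (l / (l + u))"
proof -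
  have "AE \<omega> in M. 0 \<le> X \<omega>"
    using exponential_pos_AE[OF DX l] by eventually_elim simp
  then show ?thesis
    using prob_less_exponential[OF u DY ind] exponential_laplace[OF DX l] u by simp
qed

lemma measurable_PiM_UNIV:
  assumes "\<And>i. (\<lambda>\<omega>. f \<omega> i) \<in> measurable N (K i)" and "\<And>i. space (K i) = UNIV"
  shows "f \<in> measurable N (PiM UNIV K)"
  by (rule measurable_PiM_single') (auto simp: assms PiE_def)

lemma pred_eq_real[measurable (raw)]:
  "f \<in> borel_measurable M \<Longrightarrow> g \<in> borel_measurable M \<Longrightarrow> Measurable.pred M (\<lambda>w. (f w::real) = g w)"
  unfolding pred_def by (rule borel_measurable_eq)


section \<open>Clock mechanics and the jump chain\<close>

locale queue_rates =
  fixes lam :: "'n::finite \<Rightarrow> real" and mu :: "'n \<Rightarrow> ('n \<Rightarrow> nat) \<Rightarrow> real"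
  assumes lam_pos: "\<And>i. 0 < lam i" and mu_nonneg: "\<And>i x. 0 \<le> mu i x"
begin

abbreviation "rate \<equiv> ev_rate lam mu"
abbreviation "active \<equiv> active_events lam mu"
abbreviation "hold \<equiv> hold_time lam mu"
abbreviation "fired \<equiv> fired_event lam mu"

lemma rate_nonneg: "0 \<le> rate x e"
  using lam_pos[THEN less_imp_le] mu_nonneg by (auto simp: ev_rate_def split: sum.split)

lemma arrival_active: "Inl i \<in> active x"
  using lam_pos by (simp add: active_events_def ev_rate_def)

lemma active_nonempty: "active x \<noteq> {}"
  using arrival_active by blast

lemma active_rate_pos: "e \<in> active x \<Longrightarrow> 0 < rate x e"
  by (simp add: active_events_def)

lemma fired_props: "fired x c \<in> active x \<and> c (fired x c) / rate x (fired x c) = hold x c"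
proof -
  have "hold x c \<in> (\<lambda>e. c e / rate x e) ` active x"
    unfolding hold_time_def by (rule Min_in) (auto simp: active_nonempty)
  then have "\<exists>e\<in>active x. c e / rate x e = hold x c" by force
  then show ?thesis
    unfolding fired_event_def by (rule someI_ex[OF bexE]) blast
qed

lemma hold_le: "e \<in> active x \<Longrightarrow> hold x c \<le> c e / rate x e"
  unfolding hold_time_def by (rule Min_le) auto

lemma fired_unique:
  assumes a: "a \<in> active x" and first: "\<And>f. f \<in> active x - {a} \<Longrightarrow> c a / rate x a < c f / rate x f"
  shows "fired x c = a"
proof (rule ccontr)
  assume ne: "fired x c \<noteq> a"
  have "hold x c \<le> c a / rate x a" by (rule hold_le[OF a])
  also have "\<dots> < c (fired x c) / rate x (fired x c)" using first[of "fired x c"] fired_props ne by blast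
  also have "\<dots> = hold x c" using fired_props by blast
  finally show False by simp
qed

lemma fired_if_beats_others:
  assumes a: "a \<in> active x"
    and beats: "c a / rate x a < Min ((\<lambda>f. c f / rate x f) ` (active x - {a}))"
  shows "fired x c = a"
proof (rule fired_unique[OF a])
  fix f assume "f \<in> active x - {a}"
  then have "Min ((\<lambda>f. c f / rate x f) ` (active x - {a})) \<le> c f / rate x f"
    by (intro Min_le) auto
  with beats show "c a / rate x a < c f / rate x f" by simp
qed

lemma hold_pos: "(\<And>e. 0 < c e) \<Longrightarrow> 0 < hold x c"
  using fired_props[of x c] active_rate_pos[of "fired x c" x] by (metis divide_pos_pos)

definition total_rate :: "('n \<Rightarrow> nat) \<Rightarrow> real" where
  "total_rate x = (\<Sum>e\<in>active x. rate x e)"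

lemma total_rate_pos: "0 < total_rate x"
  unfolding total_rate_def by (rule sum_pos) (auto simp: active_rate_pos active_nonempty)

lemma total_rate_le:
  assumes "\<And>y e. rate y e \<le> R"
  shows "total_rate x \<le> real CARD('n + 'n) * R"
proof -
  have "total_rate x \<le> (\<Sum>e\<in>(UNIV::('n+'n) set). rate x e)"
    unfolding total_rate_def by (rule sum_mono2) (auto simp: rate_nonneg)
  also have "\<dots> \<le> (\<Sum>e\<in>(UNIV::('n+'n) set). R)" by (intro sum_mono assms)
  finally show ?thesis by simp
qed

lemma rate_bounded:
  assumes "\<And>i x. mu i x \<le> B"
  shows "rate y e \<le> Max (range lam) + max B 0"
proof (cases e)
  case (Inl i)
  have "lam i \<le> Max (range lam)" by (rule Max_ge) auto
  also have "\<dots> \<le> Max (range lam) + max B 0" by simp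
  finally show ?thesis using Inl by (simp add: ev_rate_def)
next
  case (Inr i)
  have "lam i \<le> Max (range lam)" by (rule Max_ge) auto
  then have "0 < Max (range lam)" using lam_pos[of i] by linarith
  then show ?thesis using Inr assms[of i y] by (auto simp: ev_rate_def)
qed

definition next_state :: "('n \<Rightarrow> nat) \<Rightarrow> ('n + 'n \<Rightarrow> real) \<Rightarrow> ('n \<Rightarrow> nat)" where
  "next_state x c = apply_event x (fired x c)"

abbreviation "Clocks \<equiv> (PiM UNIV (\<lambda>_::'n+'n. borel) :: ('n + 'n \<Rightarrow> real) measure)"

lemma hold_measurable[measurable]: "(\<lambda>c. hold x c) \<in> borel_measurable Clocks"
  unfolding hold_time_def by (rule borel_measurable_Min) auto

text \<open>The fired event is a measurable function of the clocks: it is a choice from the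
  set of minimising events, and that set takes only finitely many values.\<close>
lemma fired_measurable[measurable]: "(\<lambda>c. fired x c) \<in> measurable Clocks (count_space UNIV)"
proof -
  define argmins where "argmins c = {e. e \<in> active x \<and> c e / rate x e = hold x c}" for c
  have eq: "fired x c = (\<lambda>S. Eps (\<lambda>e. e \<in> S)) (argmins c)" for c
    unfolding fired_event_def argmins_def by simp
  have "argmins \<in> measurable Clocks (count_space UNIV)"
  proof (subst measurable_count_space_eq2_countable, safe)
    fix S :: "('n+'n) set"
    have "argmins -` {S} \<inter> space Clocks =
        {c\<in>space Clocks. \<forall>e\<in>UNIV. (e \<in> S) = (e \<in> active x \<and> c e / rate x e = hold x c)}"
      by (auto simp: argmins_def)
    also have "\<dots> \<in> sets Clocks" by measurable
    finally show "argmins -` {S} \<inter> space Clocks \<in> sets Clocks" .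
  qed auto
  then show ?thesis
    unfolding eq by measurable
qed

lemma next_state_measurable[measurable]: "(\<lambda>c. next_state x c) \<in> measurable Clocks (count_space UNIV)"
  unfolding next_state_def by (rule measurable_compose[OF fired_measurable]) simp

fun path_state :: "('n \<Rightarrow> nat) \<Rightarrow> nat \<Rightarrow> (nat \<Rightarrow> 'n + 'n \<Rightarrow> real) \<Rightarrow> ('n \<Rightarrow> nat)" where
  "path_state x0 0 v = x0"
| "path_state x0 (Suc k) v = next_state (path_state x0 k v) (v k)"

fun path_time :: "('n \<Rightarrow> nat) \<Rightarrow> nat \<Rightarrow> (nat \<Rightarrow> 'n + 'n \<Rightarrow> real) \<Rightarrow> real" where
  "path_time x0 0 v = 0"
| "path_time x0 (Suc k) v = path_time x0 k v + hold (path_state x0 k v) (v k)"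

lemma jump_chain_path: "jump_chain lam mu x0 E k \<omega> = path_state x0 k (\<lambda>m e. E m e \<omega>)"
  by (induction k) (simp_all add: Let_def next_state_def)

lemma jump_time_path: "jump_time lam mu x0 E k \<omega> = path_time x0 k (\<lambda>m e. E m e \<omega>)"
  by (induction k) (simp_all add: jump_chain_path)

lemma path_state_local: "(\<And>m. m < k \<Longrightarrow> v m = v' m) \<Longrightarrow> path_state x0 k v = path_state x0 k v'"
  by (induction k) auto

lemma path_time_local: "(\<And>m. m < k \<Longrightarrow> v m = v' m) \<Longrightarrow> path_time x0 k v = path_time x0 k v'"
proof (induction k)
  case (Suc k)
  then show ?case using path_state_local[of k v v'] by auto
qed simp

lemma path_time_mono:
  assumes "\<And>k e. 0 < v k e"
  shows "incseq (\<lambda>n. path_time x0 n v)"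
proof (rule incseq_SucI)
  fix n
  have "0 < hold (path_state x0 n v) (v n)" by (rule hold_pos) (use assms in auto)
  then show "path_time x0 n v \<le> path_time x0 (Suc n) v" by simp
qed

abbreviation "ClockArray \<equiv> (PiM UNIV (\<lambda>_::nat. Clocks) :: (nat \<Rightarrow> 'n + 'n \<Rightarrow> real) measure)"

lemma path_state_measurable[measurable]: "path_state x0 k \<in> measurable ClockArray (count_space UNIV)"
proof (induction k)
  case (Suc k)
  have "(\<lambda>v. (\<lambda>x v. next_state x (v k)) (path_state x0 k v) v) \<in> measurable ClockArray (count_space UNIV)"
    by (rule measurable_compose_countable'[OF _ Suc]) auto
  then show ?case by simp
qed simp

lemma path_time_measurable[measurable]: "path_time x0 k \<in> borel_measurable ClockArray"
proof (induction k)
  case (Suc k)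
  have "(\<lambda>v. (\<lambda>x v. hold x (v k)) (path_state x0 k v) v) \<in> borel_measurable ClockArray"
    by (rule measurable_compose_countable'[OF _ path_state_measurable]) auto
  with Suc show ?case by simp
qed simp

end


locale queue_clocks = queue_rates lam mu + prob_space M
  for lam :: "'n::finite \<Rightarrow> real" and mu and M :: "'a measure" +
  fixes E :: "nat \<Rightarrow> 'n + 'n \<Rightarrow> 'a \<Rightarrow> real"
  assumes clocks_indep: "indep_vars (\<lambda>_. borel) (\<lambda>(k, e). E k e) UNIV"
    and clocks_exp: "\<And>k e. distributed M lborel (E k e) (exponential_density 1)"
begin

lemma clock_measurable[measurable]: "E k e \<in> borel_measurable M"
  using clocks_exp[of k e] by (simp add: exponential_distributed_iff)

lemma clock_row_measurable[measurable]: "(\<lambda>\<omega> e. E k e \<omega>) \<in> measurable M Clocks"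
  by (rule measurable_PiM_UNIV) auto

lemma clock_array_measurable[measurable]: "(\<lambda>\<omega> m e. E m e \<omega>) \<in> measurable M ClockArray"
  by (rule measurable_PiM_UNIV) (auto simp: space_PiM)

lemma clocks_pos_AE: "AE \<omega> in M. \<forall>k e. 0 < E k e \<omega>"
  using exponential_pos_AE[OF clocks_exp] by (simp add: AE_all_countable)

lemma indep_rows: "indep_vars (\<lambda>_. Clocks) (\<lambda>m \<omega> e. E m e \<omega>) UNIV"
proof -
  have "indep_vars (\<lambda>m. PiM ({m} \<times> UNIV) (\<lambda>_. borel))
      (\<lambda>m \<omega>. restrict (\<lambda>i. (\<lambda>(k, e). E k e) i \<omega>) ({m} \<times> UNIV)) UNIV"
    by (rule indep_vars_restrict[OF clocks_indep]) (auto simp: disjoint_family_on_def)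
  then have "indep_vars (\<lambda>_. Clocks) (\<lambda>m \<omega>. (\<lambda>w e. w (m, e))
      (restrict (\<lambda>i. (\<lambda>(k, e). E k e) i \<omega>) ({m} \<times> UNIV))) UNIV"
    by (rule indep_vars_compose2) (rule measurable_PiM_UNIV, auto)
  then show ?thesis by simp
qed

lemma indep_within_row: "indep_vars (\<lambda>_. borel) (\<lambda>e. E k e) UNIV"
proof -
  have I: "indep_sets (\<lambda>i. sigma_sets (space M) {(\<lambda>(k, e). E k e) i -` A \<inter> space M |A. A \<in> sets borel}) UNIV"
    using clocks_indep by (simp add: indep_vars_def)
  have "indep_sets (\<lambda>e. sigma_sets (space M) {E k e -` A \<inter> space M |A. A \<in> sets borel}) UNIV"
  proof (rule indep_setsI)
    fix e :: "'n+'n"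
    show "sigma_sets (space M) {E k e -` A \<inter> space M |A. A \<in> sets borel} \<subseteq> events"
      by (rule sets.sigma_sets_subset) (auto intro: measurable_sets[OF clock_measurable])
  next
    fix J :: "('n+'n) set" and A assume J: "J \<noteq> {}" "J \<subseteq> UNIV" "finite J"
      and A: "\<forall>j\<in>J. A j \<in> sigma_sets (space M) {E k j -` A \<inter> space M |A. A \<in> sets borel}"
    define J' where "J' = (\<lambda>e. (k, e)) ` J"
    define A' where "A' p = A (snd p)" for p :: "nat \<times> ('n+'n)"
    have "prob (\<Inter>j\<in>J'. A' j) = (\<Prod>j\<in>J'. prob (A' j))"
      by (rule indep_setsD[OF I]) (use J A in \<open>auto simp: J'_def A'_def\<close>)
    moreover have "(\<Inter>j\<in>J'. A' j) = (\<Inter>j\<in>J. A j)" by (auto simp: J'_def A'_def)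
    moreover have "(\<Prod>j\<in>J'. prob (A' j)) = (\<Prod>j\<in>J. prob (A j))"
      unfolding J'_def by (subst prod.reindex) (auto simp: inj_on_def A'_def)
    ultimately show "prob (\<Inter>j\<in>J. A j) = (\<Prod>j\<in>J. prob (A j))" by simp
  qed
  then show ?thesis by (simp add: indep_vars_def)
qed

definition jstate :: "('n \<Rightarrow> nat) \<Rightarrow> nat \<Rightarrow> 'a \<Rightarrow> ('n \<Rightarrow> nat)" where
  "jstate x0 k \<omega> = path_state x0 k (\<lambda>m e. E m e \<omega>)"
definition jtime :: "('n \<Rightarrow> nat) \<Rightarrow> nat \<Rightarrow> 'a \<Rightarrow> real" where
  "jtime x0 k \<omega> = path_time x0 k (\<lambda>m e. E m e \<omega>)"

lemma jstate_measurable[measurable]: "jstate x0 k \<in> measurable M (count_space UNIV)"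
  unfolding jstate_def by measurable
lemma jtime_measurable[measurable]: "jtime x0 k \<in> borel_measurable M"
  unfolding jtime_def by measurable

lemma jstate_Suc: "jstate x0 (Suc k) \<omega> = next_state (jstate x0 k \<omega>) (\<lambda>e. E k e \<omega>)"
  by (simp add: jstate_def)
lemma jtime_Suc: "jtime x0 (Suc k) \<omega> = jtime x0 k \<omega> + hold (jstate x0 k \<omega>) (\<lambda>e. E k e \<omega>)"
  by (simp add: jstate_def jtime_def)

text \<open>Markov property in integrated form: the state and time after k steps are
  independent of the k-th row of clocks, so the latter can be integrated out first.\<close>
lemma integrate_out_current_row:
  assumes F[measurable]: "F \<in> borel_measurable ((count_space UNIV \<Otimes>\<^sub>M borel) \<Otimes>\<^sub>M Clocks)"
  shows "(\<integral>\<^sup>+\<omega>. F ((jstate x0 k \<omega>, jtime x0 k \<omega>), (\<lambda>e. E k e \<omega>)) \<partial>M)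
    = (\<integral>\<^sup>+\<omega>. (\<integral>\<^sup>+\<omega>'. F ((jstate x0 k \<omega>, jtime x0 k \<omega>), (\<lambda>e. E k e \<omega>')) \<partial>M) \<partial>M)"
proof -
  have I: "indep_var (PiM {..<k} (\<lambda>_. Clocks)) (\<lambda>\<omega>. restrict (\<lambda>m e. E m e \<omega>) {..<k})
      (PiM {k} (\<lambda>_. Clocks)) (\<lambda>\<omega>. restrict (\<lambda>m e. E m e \<omega>) {k})"
    by (rule indep_var_restrict[OF indep_rows]) auto
  define pad where "pad w = (\<lambda>m. if m < k then w m else (\<lambda>_::'n+'n. 0::real))"
    for w :: "nat \<Rightarrow> 'n+'n \<Rightarrow> real"
  have pad_meas[measurable]: "pad \<in> measurable (PiM {..<k} (\<lambda>_. Clocks)) ClockArray"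
    unfolding pad_def
  proof (rule measurable_PiM_UNIV)
    show "(\<lambda>w. if i < k then w i else (\<lambda>_. 0)) \<in> measurable (PiM {..<k} (\<lambda>_. Clocks)) Clocks" for i
      by (cases "i < k") (auto intro!: measurable_const simp: space_PiM)
  qed (simp add: space_PiM)
  define G where "G p = F ((path_state x0 k (pad (fst p)), path_time x0 k (pad (fst p))), snd p k)" for p
  have Gm: "G \<in> borel_measurable (PiM {..<k} (\<lambda>_. Clocks) \<Otimes>\<^sub>M PiM {k} (\<lambda>_. Clocks))"
    unfolding G_def by measurable
  have "path_state x0 k (pad (restrict (\<lambda>m e. E m e \<omega>) {..<k})) = jstate x0 k \<omega>" for \<omega>
    unfolding jstate_def by (auto simp: pad_def intro!: path_state_local)
  moreover have "path_time x0 k (pad (restrict (\<lambda>m e. E m e \<omega>) {..<k})) = jtime x0 k \<omega>" for \<omega>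
    unfolding jtime_def by (auto simp: pad_def intro!: path_time_local)
  ultimately show ?thesis
    using nn_integral_indep_var[OF I Gm] by (simp add: G_def)
qed


section \<open>The law of the fired event\<close>

abbreviation "fired_at x k \<omega> \<equiv> fired x (\<lambda>e. E k e \<omega>)"

lemma fired_at_measurable[measurable]: "(\<lambda>\<omega>. fired_at x k \<omega>) \<in> measurable M (count_space UNIV)"
  by measurable

lemma fired_at_sets[measurable]: "{\<omega>\<in>space M. fired_at x k \<omega> = a} \<in> sets M"
  by measurable

lemma scaled_clock_exp: "0 < r \<Longrightarrow> distributed M lborel (\<lambda>\<omega>. E k e \<omega> / r) (exponential_density r)"
  using erlang_distributed_mult_const[OF clocks_exp[of k e], of "1/r"] by (simp add: field_simps)

text \<open>Event a fires with probability at least rate a / total rate: it suffices that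
  its clock beats the minimum of the other clocks, an independent exponential race.\<close>
lemma fired_prob_lower:
  assumes a: "a \<in> active x"
  shows "rate x a / total_rate x \<le> prob {\<omega>\<in>space M. fired_at x k \<omega> = a}"
proof (cases "active x - {a} = {}")
  case True
  then have "active x = {a}" using a by auto
  then have "total_rate x = rate x a" by (simp add: total_rate_def)
  moreover have "{\<omega>\<in>space M. fired_at x k \<omega> = a} = space M"
    using fired_props \<open>active x = {a}\<close> by blast
  ultimately show ?thesis using active_rate_pos[OF a] by (simp add: prob_space)
next
  case False
  define I where "I = active x - {a}"
  define X where "X \<omega> = E k a \<omega> / rate x a" for \<omega>
  define Y where "Y \<omega> = Min ((\<lambda>f. E k f \<omega> / rate x f) ` I)" for \<omega>
  have finI: "finite I" and I_ne: "I \<noteq> {}" using False by (simp_all add: I_def)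
  have ra: "0 < rate x a" by (rule active_rate_pos[OF a])
  have indep_scaled: "indep_vars (\<lambda>_. borel) (\<lambda>e \<omega>. E k e \<omega> / rate x e) UNIV"
    by (rule indep_vars_compose2[OF indep_within_row]) measurable
  have DX: "distributed M lborel X (exponential_density (rate x a))"
    unfolding X_def by (rule scaled_clock_exp[OF ra])
  have DY: "distributed M lborel Y (exponential_density (\<Sum>f\<in>I. rate x f))"
    unfolding Y_def
    by (rule exponential_distributed_Min[OF finI I_ne])
       (auto simp: I_def active_rate_pos intro: scaled_clock_exp indep_vars_subset[OF indep_scaled])
  have XY: "indep_var borel X borel Y"
    unfolding X_def Y_def
    by (rule indep_vars_Min[OF finI _ indep_vars_subset[OF indep_scaled]]) (auto simp: I_def)
  have Spos: "0 < (\<Sum>f\<in>I. rate x f)"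
    by (rule sum_pos[OF finI I_ne]) (auto simp: I_def active_rate_pos)
  have total: "total_rate x = rate x a + (\<Sum>f\<in>I. rate x f)"
    unfolding total_rate_def I_def using a by (simp add: sum.remove)
  have "prob {\<omega>\<in>space M. X \<omega> < Y \<omega>} = rate x a / total_rate x"
    using exponential_race[OF ra Spos DX DY XY] ra total_rate_pos[of x]
    by (simp add: total emeasure_eq_measure)
  moreover have "prob {\<omega>\<in>space M. X \<omega> < Y \<omega>} \<le> prob {\<omega>\<in>space M. fired_at x k \<omega> = a}"
    by (rule finite_measure_mono)
       (auto simp: X_def Y_def I_def intro!: fired_if_beats_others[OF a])
  ultimately show ?thesis by simp
qed

lemma fired_prob_inactive: "b \<notin> active x \<Longrightarrow> prob {\<omega>\<in>space M. fired_at x k \<omega> = b} = 0"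
  using fired_props by (metis (mono_tags, lifting) Collect_empty_eq measure_empty)

lemma fired_prob_sum: "(\<Sum>e\<in>UNIV. prob {\<omega>\<in>space M. fired_at x k \<omega> = e}) = 1"
proof -
  have "(\<Sum>e\<in>UNIV. prob {\<omega>\<in>space M. fired_at x k \<omega> = e}) = prob (\<Union>e\<in>UNIV. {\<omega>\<in>space M. fired_at x k \<omega> = e})"
    by (rule finite_measure_finite_Union[symmetric]) (auto simp: disjoint_family_on_def)
  also have "(\<Union>e\<in>UNIV. {\<omega>\<in>space M. fired_at x k \<omega> = e}) = space M"
    by blast
  finally show ?thesis by (simp add: prob_space)
qed

text \<open>Since the lower bounds add up to 1, they also give upper bounds.\<close>
lemma fired_prob_upper:
  assumes b: "b \<in> active x"
  shows "prob {\<omega>\<in>space M. fired_at x k \<omega> = b} \<le> rate x b / total_rate x"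
proof -
  have "(\<Sum>e\<in>UNIV. prob {\<omega>\<in>space M. fired_at x k \<omega> = e}) = (\<Sum>e\<in>active x. prob {\<omega>\<in>space M. fired_at x k \<omega> = e})"
    by (rule sum.mono_neutral_right) (auto simp: fired_prob_inactive)
  then have "prob {\<omega>\<in>space M. fired_at x k \<omega> = b} = 1 - (\<Sum>e\<in>active x - {b}. prob {\<omega>\<in>space M. fired_at x k \<omega> = e})"
    using fired_prob_sum[of x k] b by (simp add: sum.remove)
  also have "\<dots> \<le> 1 - (\<Sum>e\<in>active x - {b}. rate x e / total_rate x)"
    using fired_prob_lower by (intro diff_left_mono sum_mono) auto
  also have "\<dots> = (total_rate x - (\<Sum>e\<in>active x - {b}. rate x e)) / total_rate x"
    using total_rate_pos[of x] by (simp add: sum_divide_distrib[symmetric] field_simps)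
  also have "\<dots> = rate x b / total_rate x"
    using b by (simp add: total_rate_def sum.remove)
  finally show ?thesis .
qed

lemma nn_integral_fired:
  assumes h: "\<And>e. 0 \<le> h e"
  shows "(\<integral>\<^sup>+\<omega>. ennreal (h (fired_at x k \<omega>)) \<partial>M)
    = ennreal (\<Sum>e\<in>UNIV. h e * prob {\<omega>\<in>space M. fired_at x k \<omega> = e})"
proof -
  have "(\<integral>\<^sup>+\<omega>. ennreal (h (fired_at x k \<omega>)) \<partial>M) =
      (\<integral>\<^sup>+\<omega>. (\<Sum>e\<in>UNIV. ennreal (h e) * indicator {\<omega>\<in>space M. fired_at x k \<omega> = e} \<omega>) \<partial>M)"
  proof (rule nn_integral_cong)
    fix \<omega> assume \<omega>: "\<omega> \<in> space M"
    have "(\<Sum>e\<in>UNIV. ennreal (h e) * indicator {\<omega>\<in>space M. fired_at x k \<omega> = e} \<omega>)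
        = (\<Sum>e\<in>{fired_at x k \<omega>}. ennreal (h e) * indicator {\<omega>\<in>space M. fired_at x k \<omega> = e} \<omega>)"
      by (intro sum.mono_neutral_right) (auto split: split_indicator)
    then show "ennreal (h (fired_at x k \<omega>)) =
        (\<Sum>e\<in>UNIV. ennreal (h e) * indicator {\<omega>\<in>space M. fired_at x k \<omega> = e} \<omega>)"
      using \<omega> by simp
  qed
  also have "\<dots> = (\<Sum>e\<in>UNIV. ennreal (h e) * emeasure M {\<omega>\<in>space M. fired_at x k \<omega> = e})"
    by (subst nn_integral_sum) (auto simp: nn_integral_cmult_indicator)
  also have "\<dots> = (\<Sum>e\<in>UNIV. ennreal (h e * prob {\<omega>\<in>space M. fired_at x k \<omega> = e}))"
    using h by (intro sum.cong refl) (simp add: emeasure_eq_measure ennreal_mult)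
  also have "\<dots> = ennreal (\<Sum>e\<in>UNIV. h e * prob {\<omega>\<in>space M. fired_at x k \<omega> = e})"
    using h by (intro sum_ennreal) auto
  finally show ?thesis .
qed

text \<open>Only the arrival and the departure of queue j change its length; hence the mean
  of any function of the j-th coordinate after one step is a three-term average.\<close>
lemma fired_sum_coordinate:
  "(\<Sum>e\<in>UNIV. h (apply_event x e j) * prob {\<omega>\<in>space M. fired_at x k \<omega> = e})
   = h (x j + 1) * prob {\<omega>\<in>space M. fired_at x k \<omega> = Inl j}
     + h (x j - 1) * prob {\<omega>\<in>space M. fired_at x k \<omega> = Inr j}
     + h (x j) * (1 - prob {\<omega>\<in>space M. fired_at x k \<omega> = Inl j} - prob {\<omega>\<in>space M. fired_at x k \<omega> = Inr j})"
proof -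
  define p where "p e = prob {\<omega>\<in>space M. fired_at x k \<omega> = e}" for e
  have split: "(\<Sum>e\<in>UNIV. f e) = f (Inl j) + f (Inr j) + (\<Sum>e\<in>UNIV - {Inl j, Inr j}. f e)"
    for f :: "'n + 'n \<Rightarrow> real"
  proof -
    have "(\<Sum>e\<in>UNIV. f e) = (\<Sum>e\<in>insert (Inl j) (insert (Inr j) (UNIV - {Inl j, Inr j})). f e)"
      by (rule sum.cong) auto
    then show ?thesis by simp
  qed
  have other: "apply_event x e j = x j" if "e \<in> UNIV - {Inl j, Inr j}" for e
    using that by (cases e) (auto simp: apply_event_def)
  have "(\<Sum>e\<in>UNIV - {Inl j, Inr j}. h (apply_event x e j) * p e) = (\<Sum>e\<in>UNIV - {Inl j, Inr j}. h (x j) * p e)"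
    by (intro sum.cong refl) (simp add: other)
  also have "\<dots> = h (x j) * (1 - p (Inl j) - p (Inr j))"
    using fired_prob_sum[of x k, folded p_def, unfolded split[of p]]
    by (simp add: sum_distrib_left[symmetric])
  finally show ?thesis
    by (subst split) (simp add: apply_event_def p_def)
qed


section \<open>Non-explosion\<close>

text \<open>Contraction factor for E[exp(-T)] per step when m clocks run at rates at most R:
  with probability exp(-1)^m all clocks exceed 1, and then the holding time exceeds 1/R.\<close>
definition decay :: "nat \<Rightarrow> real \<Rightarrow> real" where
  "decay m R = 1 - (1 - exp (- 1 / R)) * exp (-1) ^ m"

lemma decay_bounds:
  assumes "0 < R"
  shows "0 \<le> decay m R" "decay m R < 1"
proof -
  have a: "0 < 1 - exp (- 1 / R)" "1 - exp (- 1 / R) \<le> 1" using assms by auto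
  have b: "0 < exp (-1::real) ^ m" "exp (-1::real) ^ m \<le> 1"
    by (auto intro: power_le_one)
  have "(1 - exp (- 1 / R)) * exp (-1) ^ m \<le> 1"
    using a b by (simp add: mult_le_one)
  moreover have "0 < (1 - exp (- 1 / R)) * exp (-1) ^ m"
    using a b by simp
  ultimately show "0 \<le> decay m R" "decay m R < 1" by (auto simp: decay_def)
qed

lemma prob_all_clocks_exceed_1: "prob {\<omega>\<in>space M. \<forall>e. 1 < E k e \<omega>} = exp (-1) ^ CARD('n + 'n)"
proof -
  have "{\<omega>\<in>space M. \<forall>e. 1 < E k e \<omega>} = (\<Inter>e\<in>UNIV. E k e -` {1<..} \<inter> space M)" by auto
  then have "prob {\<omega>\<in>space M. \<forall>e. 1 < E k e \<omega>} = (\<Prod>e\<in>UNIV. prob (E k e -` {1<..} \<inter> space M))"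
    using indep_varsD[OF indep_within_row, of UNIV "\<lambda>_. {1<..}"] by simp
  also have "\<dots> = (\<Prod>e\<in>(UNIV::('n+'n) set). exp (-1))"
  proof (intro prod.cong refl)
    fix e
    have "prob (E k e -` {1<..} \<inter> space M) = \<P>(x in M. 1 < E k e x)"
      by (rule arg_cong[where f=prob]) auto
    also have "\<dots> = exp (- 1 * 1)" by (rule exponential_distributedD_gt[OF clocks_exp]) auto
    finally show "prob (E k e -` {1<..} \<inter> space M) = exp (-1)" by simp
  qed
  finally show ?thesis by simp
qed

lemma hold_laplace_bound:
  assumes R: "\<And>y e. rate y e \<le> R" and R_pos: "0 < R"
  shows "(\<integral>\<^sup>+\<omega>. ennreal (exp (- hold y (\<lambda>e. E k e \<omega>))) \<partial>M) \<le> ennreal (decay CARD('n + 'n) R)"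
proof -
  define G where "G = {\<omega>\<in>space M. \<forall>e. 1 < E k e \<omega>}"
  have [measurable]: "G \<in> events" unfolding G_def by measurable
  define d where "d = exp (- 1 / R)"
  have d: "0 \<le> d" "d \<le> 1" using R_pos by (auto simp: d_def)
  have "(\<integral>\<^sup>+\<omega>. ennreal (exp (- hold y (\<lambda>e. E k e \<omega>))) \<partial>M)
      \<le> (\<integral>\<^sup>+\<omega>. ennreal d * indicator G \<omega> + indicator (space M - G) \<omega> \<partial>M)"
  proof (rule nn_integral_mono_AE)
    show "AE \<omega> in M. ennreal (exp (- hold y (\<lambda>e. E k e \<omega>))) \<le> ennreal d * indicator G \<omega> + indicator (space M - G) \<omega>"
      using clocks_pos_AE AE_space
    proof eventually_elim
      case (elim \<omega>)
      have hp: "0 < hold y (\<lambda>e. E k e \<omega>)" by (rule hold_pos) (use elim in auto)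
      show ?case
      proof (cases "\<omega> \<in> G")
        case True
        let ?f = "fired_at y k \<omega>"
        have r: "0 < rate y ?f" "rate y ?f \<le> R" using fired_props active_rate_pos R by auto
        have "1 / R \<le> 1 / rate y ?f" using r by (intro divide_left_mono) auto
        also have "\<dots> < E k ?f \<omega> / rate y ?f" using True r by (intro divide_strict_right_mono) (auto simp: G_def)
        also have "\<dots> = hold y (\<lambda>e. E k e \<omega>)" using fired_props[of y "\<lambda>e. E k e \<omega>"] by simp
        finally have "exp (- hold y (\<lambda>e. E k e \<omega>)) \<le> d" by (simp add: d_def)
        then show ?thesis using True by (simp add: ennreal_leI)
      next
        case False
        then show ?thesis using elim hp by simp
      qed
    qed
  qed
  also have "\<dots> = ennreal d * emeasure M G + emeasure M (space M - G)"
    by (subst nn_integral_add) (auto simp: nn_integral_cmult_indicator)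
  also have "\<dots> = ennreal (d * prob G + (1 - prob G))"
    using d by (simp add: emeasure_eq_measure prob_compl ennreal_mult)
  also have "d * prob G + (1 - prob G) = decay CARD('n + 'n) R"
    using prob_all_clocks_exceed_1[of k] by (simp add: G_def decay_def d_def algebra_simps)
  finally show ?thesis .
qed

lemma jtime_laplace:
  assumes R: "\<And>y e. rate y e \<le> R" and R_pos: "0 < R"
  shows "(\<integral>\<^sup>+\<omega>. ennreal (exp (- jtime x0 n \<omega>)) \<partial>M) \<le> ennreal (decay CARD('n + 'n) R ^ n)"
proof (induction n)
  case 0
  then show ?case by (simp add: jtime_def emeasure_space_1)
next
  case (Suc n)
  define F where "F p = ennreal (exp (- snd (fst p))) * ennreal (exp (- hold (fst (fst p)) (snd p)))"
    for p :: "(('n \<Rightarrow> nat) \<times> real) \<times> ('n + 'n \<Rightarrow> real)"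
  have "(\<lambda>p. (\<lambda>y p. ennreal (exp (- snd (fst p))) * ennreal (exp (- hold y (snd p)))) (fst (fst p)) p)
      \<in> borel_measurable ((count_space UNIV \<Otimes>\<^sub>M borel) \<Otimes>\<^sub>M Clocks)"
    by (rule measurable_compose_countable'[where I=UNIV and g="\<lambda>p. fst (fst p)"
          and f="\<lambda>y p. ennreal (exp (- snd (fst p))) * ennreal (exp (- hold y (snd p)))"]) measurable
  then have Fm: "F \<in> borel_measurable ((count_space UNIV \<Otimes>\<^sub>M borel) \<Otimes>\<^sub>M Clocks)"
    by (simp add: F_def[abs_def])
  have "(\<integral>\<^sup>+\<omega>. ennreal (exp (- jtime x0 (Suc n) \<omega>)) \<partial>M)
      = (\<integral>\<^sup>+\<omega>. F ((jstate x0 n \<omega>, jtime x0 n \<omega>), (\<lambda>e. E n e \<omega>)) \<partial>M)"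
    unfolding F_def
    by (intro nn_integral_cong) (simp add: jtime_Suc exp_add[symmetric] ennreal_mult[symmetric])
  also have "\<dots> = (\<integral>\<^sup>+\<omega>. ennreal (exp (- jtime x0 n \<omega>)) *
      (\<integral>\<^sup>+\<omega>'. ennreal (exp (- hold (jstate x0 n \<omega>) (\<lambda>e. E n e \<omega>'))) \<partial>M) \<partial>M)"
    by (simp only: integrate_out_current_row[OF Fm]) (intro nn_integral_cong, simp add: F_def nn_integral_cmult)
  also have "\<dots> \<le> (\<integral>\<^sup>+\<omega>. ennreal (exp (- jtime x0 n \<omega>)) * ennreal (decay CARD('n + 'n) R) \<partial>M)"
    by (intro nn_integral_mono mult_left_mono hold_laplace_bound[OF R R_pos]) auto
  also have "\<dots> = ennreal (decay CARD('n + 'n) R) * (\<integral>\<^sup>+\<omega>. ennreal (exp (- jtime x0 n \<omega>)) \<partial>M)"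
    by (subst nn_integral_multc) (auto simp: mult.commute)
  also have "\<dots> \<le> ennreal (decay CARD('n + 'n) R) * ennreal (decay CARD('n + 'n) R ^ n)" by (intro mult_left_mono Suc.IH) auto
  also have "\<dots> = ennreal (decay CARD('n + 'n) R ^ Suc n)"
    using decay_bounds[OF R_pos] by (simp add: ennreal_mult[symmetric])
  finally show ?case .
qed

text \<open>Chernoff bound for the jump times, from their Laplace transform.\<close>
lemma jtime_small_prob:
  assumes R: "\<And>y e. rate y e \<le> R" and R_pos: "0 < R"
  shows "prob {\<omega>\<in>space M. jtime x0 n \<omega> \<le> t} \<le> exp t * decay CARD('n + 'n) R ^ n"
proof -
  have "emeasure M {\<omega>\<in>space M. jtime x0 n \<omega> \<le> t} = (\<integral>\<^sup>+\<omega>. indicator {\<omega>\<in>space M. jtime x0 n \<omega> \<le> t} \<omega> \<partial>M)"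
    by simp
  also have "\<dots> \<le> (\<integral>\<^sup>+\<omega>. ennreal (exp t) * ennreal (exp (- jtime x0 n \<omega>)) \<partial>M)"
    by (intro nn_integral_mono) (auto simp: ennreal_mult[symmetric] exp_add[symmetric] split: split_indicator)
  also have "\<dots> = ennreal (exp t) * (\<integral>\<^sup>+\<omega>. ennreal (exp (- jtime x0 n \<omega>)) \<partial>M)"
    by (subst nn_integral_cmult) auto
  also have "\<dots> \<le> ennreal (exp t) * ennreal (decay CARD('n + 'n) R ^ n)" by (intro mult_left_mono jtime_laplace[OF R R_pos]) auto
  also have "\<dots> = ennreal (exp t * decay CARD('n + 'n) R ^ n)"
    using decay_bounds[OF R_pos] by (simp add: ennreal_mult[symmetric])
  finally show ?thesis using decay_bounds[OF R_pos] by (simp add: emeasure_eq_measure)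
qed

text \<open>No explosion: by Borel-Cantelli, every level is eventually exceeded by the jump times.\<close>
lemma jtime_unbounded:
  assumes R: "\<And>y e. rate y e \<le> R" and R_pos: "0 < R"
  shows "AE \<omega> in M. \<forall>m::nat. eventually (\<lambda>n. real m < jtime x0 n \<omega>) sequentially"
proof -
  have "AE \<omega> in M. eventually (\<lambda>n. real m < jtime x0 n \<omega>) sequentially" for m :: nat
  proof -
    have "summable (\<lambda>n. exp (real m) * decay CARD('n + 'n) R ^ n)"
      using decay_bounds[OF R_pos] by (intro summable_mult summable_geometric) auto
    then have "summable (\<lambda>n. prob {\<omega>\<in>space M. jtime x0 n \<omega> \<le> real m})"
      by (rule summable_comparison_test'[where N=0]) (use jtime_small_prob[OF R R_pos] in auto)
    then have "AE \<omega> in M. eventually (\<lambda>n. \<omega> \<in> space M - {\<omega>\<in>space M. jtime x0 n \<omega> \<le> real m}) sequentially"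
      by (intro borel_cantelli_AE1) (auto simp: less_top[symmetric])
    then show ?thesis
      by eventually_elim (auto simp: not_le elim: eventually_mono)
  qed
  then show ?thesis by (simp add: AE_all_countable)
qed

end


section \<open>A Lyapunov function for an overloaded queue\<close>

locale overloaded_queue = queue_clocks lam mu M E
  for lam :: "'n::finite \<Rightarrow> real" and mu M and E :: "nat \<Rightarrow> 'n + 'n \<Rightarrow> 'a \<Rightarrow> real" +
  fixes j :: 'n and n0 :: nat and c B R :: real
  assumes c_pos: "0 < c" and c_lt: "c < lam j" and c_le_B: "c \<le> B" and mu_le_B: "\<And>x. mu j x \<le> B"
    and mu_le_c: "\<And>x. n0 \<le> x j \<Longrightarrow> mu j x \<le> c"
    and rate_le_R: "\<And>x e. ev_rate lam mu x e \<le> R"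
begin

definition ratio where "ratio = c / lam j"

text \<open>The decrements of phi: from one level to the next they change by the factor
  B/lam j below level n0 and by c/lam j < 1 above it, so that arrivals outweigh
  departures in the drift of phi (see decr_balance).\<close>
definition decr :: "nat \<Rightarrow> real" where "decr z = (B / c) ^ min z n0 * ratio ^ z"
definition phi_top where "phi_top = (B / c) ^ n0 / (1 - ratio)"

definition phi :: "nat \<Rightarrow> real" where "phi y = phi_top - (\<Sum>z\<in>{1..y}. decr z)"

lemma ratio_pos: "0 < ratio" and ratio_lt1: "ratio < 1"
  using c_pos c_lt lam_pos[of j] by (auto simp: ratio_def)

lemma B_div_c: "1 \<le> B / c" using c_pos c_le_B by simp

lemma decr_pos: "0 < decr z"
  unfolding decr_def using ratio_pos B_div_c by simp

lemma decr_le: "decr z \<le> (B / c) ^ n0 * ratio ^ z"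
  unfolding decr_def using ratio_pos B_div_c
  by (intro mult_right_mono power_increasing) auto

text \<open>The decrements are summable, so phi stays nonnegative.\<close>
lemma phi_nonneg: "0 \<le> phi y"
proof -
  have "(\<Sum>z\<in>{1..y}. decr z) \<le> (\<Sum>z\<in>{1..y}. (B / c) ^ n0 * ratio ^ z)"
    by (intro sum_mono decr_le)
  also have "\<dots> \<le> (\<Sum>z<Suc y. (B / c) ^ n0 * ratio ^ z)"
    using ratio_pos B_div_c by (intro sum_mono2) auto
  also have "\<dots> = (B / c) ^ n0 * ((1 - ratio ^ Suc y) / (1 - ratio))"
  proof -
    have "(\<Sum>z<Suc y. ratio ^ z) = (ratio ^ Suc y - 1) / (ratio - 1)"
      by (rule geometric_sum) (use ratio_lt1 in simp)
    also have "\<dots> = (1 - ratio ^ Suc y) / (1 - ratio)"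
      using ratio_lt1 by (simp add: field_simps)
    finally show ?thesis by (simp add: sum_distrib_left[symmetric])
  qed
  also have "\<dots> \<le> (B / c) ^ n0 * (1 / (1 - ratio))"
    using ratio_pos ratio_lt1 B_div_c by (intro mult_left_mono divide_right_mono) auto
  also have "\<dots> = phi_top" by (simp add: phi_top_def)
  finally show ?thesis by (simp add: phi_def)
qed

lemma phi_Suc: "phi (Suc y) = phi y - decr (Suc y)"
  by (simp add: phi_def)

lemma decr_balance:
  assumes m: "m \<le> B" and mc: "n0 \<le> y \<Longrightarrow> m \<le> c" and m0: "0 \<le> m"
  shows "m * decr y \<le> lam j * decr (Suc y)"
proof (cases "Suc y \<le> n0")
  case True
  then have "decr (Suc y) = (B / c) * ratio * decr y"
    by (simp add: decr_def min_def)
  also have "(B / c) * ratio = B / lam j"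
    using c_pos by (simp add: ratio_def)
  finally have "lam j * decr (Suc y) = B * decr y"
    using lam_pos[of j] by simp
  then show ?thesis using m decr_pos[of y] by (simp add: mult_right_mono)
next
  case False
  then have "min y n0 = n0" "min (Suc y) n0 = n0" by auto
  then have "decr (Suc y) = ratio * decr y"
    by (simp add: decr_def)
  then have "lam j * decr (Suc y) = c * decr y"
    using lam_pos[of j] by (simp add: ratio_def)
  moreover have "m \<le> c" using False by (intro mc) simp
  ultimately show ?thesis using decr_pos[of y] by (simp add: mult_right_mono)
qed

definition empty_gain where "empty_gain = lam j / (real CARD('n + 'n) * R) * decr 1"

lemma R_pos: "0 < R"
  using lam_pos[of j] rate_le_R[of undefined "Inl j"] by (simp add: ev_rate_def)

lemma empty_gain_pos: "0 < empty_gain"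
  unfolding empty_gain_def using lam_pos[of j] R_pos decr_pos[of 1] by simp

lemma phi_drift:
  "(\<Sum>e\<in>UNIV. phi (apply_event x e j) * prob {\<omega>\<in>space M. fired_at x k \<omega> = e})
    + (if x j = 0 then empty_gain else 0) \<le> phi (x j)"
proof -
  define pa where "pa = prob {\<omega>\<in>space M. fired_at x k \<omega> = Inl j}"
  define pb where "pb = prob {\<omega>\<in>space M. fired_at x k \<omega> = Inr j}"
  have sum_eq: "(\<Sum>e\<in>UNIV. phi (apply_event x e j) * prob {\<omega>\<in>space M. fired_at x k \<omega> = e})
      = phi (x j) - decr (Suc (x j)) * pa + (phi (x j - 1) - phi (x j)) * pb"
    unfolding fired_sum_coordinate pa_def pb_def by (simp add: phi_Suc algebra_simps)
  have pa_ge: "lam j / total_rate x \<le> pa"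
    using fired_prob_lower[OF arrival_active, of x j k] by (simp add: pa_def ev_rate_def)
  show ?thesis
  proof (cases "x j = 0")
    case True
    have "lam j / (real CARD('n + 'n) * R) \<le> lam j / total_rate x"
      using total_rate_le[OF rate_le_R, of x] total_rate_pos[of x] lam_pos[of j] R_pos
      by (intro divide_left_mono) auto
    then have "lam j / (real CARD('n + 'n) * R) \<le> pa" using pa_ge by linarith
    then have "empty_gain \<le> pa * decr 1"
      unfolding empty_gain_def using decr_pos[of 1] by (intro mult_right_mono) auto
    then show ?thesis using True by (simp add: sum_eq mult.commute)
  next
    case False
    then obtain y where y: "x j = Suc y" by (cases "x j") auto
    have "decr (Suc y) * pb \<le> decr (Suc (Suc y)) * pa"
    proof (cases "Inr j \<in> active x")
      case True
      have "decr (Suc y) * pb \<le> decr (Suc y) * (mu j x / total_rate x)"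
        using fired_prob_upper[OF True, of k] decr_pos[of "Suc y"] y
        by (intro mult_left_mono) (auto simp: pb_def ev_rate_def)
      also have "\<dots> = (mu j x * decr (Suc y)) / total_rate x" by simp
      also have "\<dots> \<le> (lam j * decr (Suc (Suc y))) / total_rate x"
        using decr_balance[of "mu j x" "Suc y"] y mu_le_B[of x] mu_le_c[of x] mu_nonneg[of j x] total_rate_pos[of x]
        by (intro divide_right_mono) auto
      also have "\<dots> = (lam j / total_rate x) * decr (Suc (Suc y))" by simp
      also have "\<dots> \<le> pa * decr (Suc (Suc y))"
        using pa_ge decr_pos[of "Suc (Suc y)"] by (intro mult_right_mono) auto
      finally show ?thesis by (simp add: mult.commute)
    next
      case False
      then have "pb = 0" by (simp add: pb_def fired_prob_inactive)
      then show ?thesis using decr_pos[of "Suc (Suc y)"] by (simp add: pa_def)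
    qed
    then show ?thesis using y by (simp add: sum_eq phi_Suc algebra_simps)
  qed
qed

lemma phi_drift_nn:
  "(\<integral>\<^sup>+\<omega>. ennreal (phi (next_state x (\<lambda>e. E k e \<omega>) j)) \<partial>M) + ennreal (if x j = 0 then empty_gain else 0)
    \<le> ennreal (phi (x j))"
proof -
  have "(\<integral>\<^sup>+\<omega>. ennreal (phi (next_state x (\<lambda>e. E k e \<omega>) j)) \<partial>M)
      = ennreal (\<Sum>e\<in>UNIV. phi (apply_event x e j) * prob {\<omega>\<in>space M. fired_at x k \<omega> = e})"
    unfolding next_state_def by (rule nn_integral_fired) (rule phi_nonneg)
  also have "\<dots> + ennreal (if x j = 0 then empty_gain else 0)
      = ennreal ((\<Sum>e\<in>UNIV. phi (apply_event x e j) * prob {\<omega>\<in>space M. fired_at x k \<omega> = e})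
         + (if x j = 0 then empty_gain else 0))"
    using empty_gain_pos phi_nonneg
    by (intro ennreal_plus[symmetric]) (auto intro!: sum_nonneg)
  also have "\<dots> \<le> ennreal (phi (x j))"
    by (rule ennreal_leI[OF phi_drift])
  finally show ?thesis .
qed

lemma jstate_empty_sets[measurable]: "{\<omega>\<in>space M. jstate x0 n \<omega> j = 0} \<in> events"
proof -
  have "{\<omega>\<in>space M. jstate x0 n \<omega> j = 0} = jstate x0 n -` {y. y j = 0} \<inter> space M" by auto
  also have "\<dots> \<in> events" by (rule measurable_sets[OF jstate_measurable]) simp
  finally show ?thesis .
qed

definition mean_phi :: "('n \<Rightarrow> nat) \<Rightarrow> nat \<Rightarrow> ennreal" where
  "mean_phi x0 n = (\<integral>\<^sup>+\<omega>. ennreal (phi (jstate x0 n \<omega> j)) \<partial>M)"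

lemma mean_phi_step:
  "mean_phi x0 (Suc n) + ennreal empty_gain * emeasure M {\<omega>\<in>space M. jstate x0 n \<omega> j = 0} \<le> mean_phi x0 n"
proof -
  define F where "F p = ennreal (phi (next_state (fst (fst p)) (snd p) j))"
    for p :: "(('n \<Rightarrow> nat) \<times> real) \<times> ('n + 'n \<Rightarrow> real)"
  define G where "G y = (\<integral>\<^sup>+\<omega>'. ennreal (phi (next_state y (\<lambda>e. E n e \<omega>') j)) \<partial>M)" for y
  have "(\<lambda>p. (\<lambda>y p. ennreal (phi (next_state y (snd p) j))) (fst (fst p)) p)
      \<in> borel_measurable ((count_space UNIV \<Otimes>\<^sub>M borel) \<Otimes>\<^sub>M Clocks)"
  proof (rule measurable_compose_countable'[where I=UNIV and g="\<lambda>p. fst (fst p)"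
        and f="\<lambda>y p. ennreal (phi (next_state y (snd p) j))"])
    show "(\<lambda>p. ennreal (phi (next_state y (snd p) j))) \<in> borel_measurable ((count_space UNIV \<Otimes>\<^sub>M borel) \<Otimes>\<^sub>M Clocks)"
      for y
    proof -
      have "(\<lambda>p. next_state y (snd p)) \<in> measurable ((count_space UNIV \<Otimes>\<^sub>M borel) \<Otimes>\<^sub>M Clocks) (count_space UNIV)"
        by measurable
      then show ?thesis by (rule measurable_compose) simp
    qed
  qed measurable
  then have Fm: "F \<in> borel_measurable ((count_space UNIV \<Otimes>\<^sub>M borel) \<Otimes>\<^sub>M Clocks)"
    by (simp add: F_def[abs_def])
  have next_eq: "mean_phi x0 (Suc n) = (\<integral>\<^sup>+\<omega>. G (jstate x0 n \<omega>) \<partial>M)"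
    using integrate_out_current_row[OF Fm, of x0 n] by (simp add: mean_phi_def F_def G_def jstate_Suc)
  have Gm: "(\<lambda>\<omega>. G (jstate x0 n \<omega>)) \<in> borel_measurable M"
    by (rule measurable_compose[OF jstate_measurable]) simp
  have gain_eq: "ennreal empty_gain * emeasure M {\<omega>\<in>space M. jstate x0 n \<omega> j = 0}
      = (\<integral>\<^sup>+\<omega>. ennreal (if jstate x0 n \<omega> j = 0 then empty_gain else 0) \<partial>M)"
    by (subst nn_integral_cmult_indicator[symmetric]) (auto intro!: nn_integral_cong split: split_indicator)
  have "mean_phi x0 (Suc n) + ennreal empty_gain * emeasure M {\<omega>\<in>space M. jstate x0 n \<omega> j = 0}
      = (\<integral>\<^sup>+\<omega>. G (jstate x0 n \<omega>) + ennreal (if jstate x0 n \<omega> j = 0 then empty_gain else 0) \<partial>M)"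
    unfolding next_eq gain_eq by (rule nn_integral_add[symmetric]) (use Gm in auto)
  also have "\<dots> \<le> mean_phi x0 n"
    unfolding mean_phi_def G_def by (intro nn_integral_mono phi_drift_nn)
  finally show ?thesis .
qed

text \<open>Telescoping: the expected number of visits to an empty queue j is at most
  phi (x0 j) / empty_gain.\<close>
lemma mean_phi_telescope:
  "mean_phi x0 n + ennreal (empty_gain * (\<Sum>k<n. prob {\<omega>\<in>space M. jstate x0 k \<omega> j = 0}))
   \<le> ennreal (phi (x0 j))"
proof (induction n)
  case 0
  then show ?case by (simp add: mean_phi_def jstate_def emeasure_space_1)
next
  case (Suc n)
  have "mean_phi x0 (Suc n) + ennreal (empty_gain * (\<Sum>k<Suc n. prob {\<omega>\<in>space M. jstate x0 k \<omega> j = 0}))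
      = (mean_phi x0 (Suc n) + ennreal empty_gain * emeasure M {\<omega>\<in>space M. jstate x0 n \<omega> j = 0})
        + ennreal (empty_gain * (\<Sum>k<n. prob {\<omega>\<in>space M. jstate x0 k \<omega> j = 0}))"
    using empty_gain_pos
    by (simp add: distrib_left ennreal_plus[symmetric] ennreal_mult emeasure_eq_measure sum_nonneg
        add_ac)
  also have "\<dots> \<le> mean_phi x0 n + ennreal (empty_gain * (\<Sum>k<n. prob {\<omega>\<in>space M. jstate x0 k \<omega> j = 0}))"
    by (intro add_right_mono mean_phi_step)
  also have "\<dots> \<le> ennreal (phi (x0 j))" by (rule Suc.IH)
  finally show ?case .
qed

text \<open>By Borel-Cantelli, queue j is eventually never empty along the jump chain.\<close>
lemma eventually_nonempty: "AE \<omega> in M. eventually (\<lambda>n. jstate x0 n \<omega> j \<noteq> 0) sequentially"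
proof -
  have bound: "(\<Sum>k<n. prob {\<omega>\<in>space M. jstate x0 k \<omega> j = 0}) \<le> phi (x0 j) / empty_gain" for n
  proof -
    have "ennreal (empty_gain * (\<Sum>k<n. prob {\<omega>\<in>space M. jstate x0 k \<omega> j = 0})) \<le> ennreal (phi (x0 j))"
      using mean_phi_telescope[of x0 n] by (meson add_increasing order_refl zero_le order_trans)
    then have "empty_gain * (\<Sum>k<n. prob {\<omega>\<in>space M. jstate x0 k \<omega> j = 0}) \<le> phi (x0 j)"
      using phi_nonneg by simp
    then show ?thesis using empty_gain_pos by (simp add: field_simps)
  qed
  have "summable (\<lambda>k. prob {\<omega>\<in>space M. jstate x0 k \<omega> j = 0})"
    by (rule summableI_nonneg_bounded[OF _ bound]) simp
  then have "AE \<omega> in M. eventually (\<lambda>n. \<omega> \<in> space M - {\<omega>\<in>space M. jstate x0 n \<omega> j = 0}) sequentially"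
    by (intro borel_cantelli_AE1) (auto simp: less_top[symmetric])
  then show ?thesis
    by (rule AE_mp) (auto elim: eventually_mono)
qed

end

lemma (in queue_clocks) overloaded_eventually_nonempty:
  assumes "0 < c" "c < lam j" "\<And>x. n0 \<le> x j \<Longrightarrow> mu j x \<le> c"
    and "\<And>i x. mu i x \<le> B" and "\<And>x e. rate x e \<le> R"
  shows "AE \<omega> in M. eventually (\<lambda>n. jstate x0 n \<omega> j \<noteq> 0) sequentially"
proof -
  interpret overloaded_queue lam mu M E j n0 c "max B c" R
    by unfold_locales (use assms in \<open>auto intro: order_trans[OF assms(4)]\<close>)
  show ?thesis by (rule eventually_nonempty)
qed


section \<open>Overload transfers by symmetry\<close>

lemma overload_threshold:
  fixes lam :: "'n \<Rightarrow> real" and mu :: "'n \<Rightarrow> ('n \<Rightarrow> nat) \<Rightarrow> real"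
  assumes lam_pos: "0 < lam i"
    and ov: "ereal (lam i) > limsup (\<lambda>n::nat. SUP x \<in> {x. x i = n}. ereal (mu i x))"
  shows "\<exists>n0 c. 0 < c \<and> c < lam i \<and> (\<forall>x. n0 \<le> x i \<longrightarrow> mu i x \<le> c)"
proof -
  obtain c' where c': "limsup (\<lambda>n::nat. SUP x \<in> {x. x i = n}. ereal (mu i x)) < ereal c'" "ereal c' < ereal (lam i)"
    using ereal_dense2[OF ov] by blast
  have "eventually (\<lambda>n. (SUP x \<in> {x. x i = n}. ereal (mu i x)) < ereal c') sequentially"
    by (rule Limsup_lessD[OF c'(1)])
  then obtain n0 where n0: "\<And>n. n0 \<le> n \<Longrightarrow> (SUP x \<in> {x. x i = n}. ereal (mu i x)) < ereal c'"
    by (auto simp: eventually_sequentially)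
  define c where "c = max c' (lam i / 2)"
  have "mu i x \<le> c" if "n0 \<le> x i" for x
  proof -
    have "ereal (mu i x) \<le> (SUP x' \<in> {x'. x' i = x i}. ereal (mu i x'))" by (rule SUP_upper) simp
    also have "\<dots> < ereal c'" using n0[OF that] .
    finally show ?thesis by (simp add: c_def)
  qed
  moreover have "0 < c" "c < lam i" using lam_pos c'(2) by (auto simp: c_def)
  ultimately show ?thesis by blast
qed

lemma service_swap:
  fixes mu :: "'n \<Rightarrow> ('n \<Rightarrow> nat) \<Rightarrow> real"
  assumes homog_mu: "\<And>\<pi> i x. bij \<pi> \<Longrightarrow> mu (\<pi> i) (x \<circ> inv \<pi>) = mu i x"
  shows "mu j x = mu i (x \<circ> Transposition.transpose i j)"
proof -
  let ?\<tau> = "Transposition.transpose i j"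
  have "mu (?\<tau> i) ((x \<circ> ?\<tau>) \<circ> inv ?\<tau>) = mu i (x \<circ> ?\<tau>)"
    by (rule homog_mu) simp
  then show ?thesis by (simp add: o_assoc[symmetric])
qed

lemma overload_transfer:
  fixes lam :: "'n \<Rightarrow> real" and mu :: "'n \<Rightarrow> ('n \<Rightarrow> nat) \<Rightarrow> real"
  assumes lam_pos: "\<And>i. 0 < lam i"
    and homog_lam: "\<And>i j. lam i = lam j"
    and homog_mu: "\<And>\<pi> i x. bij \<pi> \<Longrightarrow> mu (\<pi> i) (x \<circ> inv \<pi>) = mu i x"
    and overload: "\<exists>i. ereal (lam i) > limsup (\<lambda>n::nat. SUP x \<in> {x. x i = n}. ereal (mu i x))"
  shows "\<exists>n0 c. 0 < c \<and> c < lam j \<and> (\<forall>x. n0 \<le> x j \<longrightarrow> mu j x \<le> c)"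
proof -
  obtain i where ov: "ereal (lam i) > limsup (\<lambda>n::nat. SUP x \<in> {x. x i = n}. ereal (mu i x))"
    using overload by blast
  obtain n0 c where c: "0 < c" "c < lam i" and below: "\<And>x. n0 \<le> x i \<Longrightarrow> mu i x \<le> c"
    using overload_threshold[where lam=lam and mu=mu and i=i, OF lam_pos[of i] ov] by blast
  have "mu j x \<le> c" if "n0 \<le> x j" for x
  proof -
    have "mu j x = mu i (x \<circ> Transposition.transpose i j)" by (rule service_swap[where mu=mu, OF homog_mu])
    also have "\<dots> \<le> c" by (rule below) (simp add: that)
    finally show ?thesis .
  qed
  then show ?thesis using c homog_lam[of i j] by auto
qed


section \<open>From the jump chain to the queue-length process\<close>

lemma eventually_piecewise_constant:
  fixes T :: "nat \<Rightarrow> real"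
  assumes mono: "incseq T" and unbounded: "\<forall>m::nat. eventually (\<lambda>k. real m < T k) sequentially"
    and ev: "eventually (\<lambda>k. P (Y k)) sequentially"
  shows "eventually (\<lambda>t. P (Y (LEAST k. t < T (Suc k)))) at_top"
proof -
  obtain K where K: "\<And>k. K \<le> k \<Longrightarrow> P (Y k)"
    using ev by (auto simp: eventually_sequentially)
  have "P (Y (LEAST k. t < T (Suc k)))" if t: "T K \<le> t" for t
  proof -
    obtain N where N: "\<And>n. N \<le> n \<Longrightarrow> real (nat \<lceil>t\<rceil>) < T n"
      using unbounded by (auto simp: eventually_sequentially)
    have "t < T (Suc N)" using N[of "Suc N"] by linarith
    then have L: "t < T (Suc (LEAST k. t < T (Suc k)))" by (rule LeastI)
    have "K \<le> (LEAST k. t < T (Suc k))"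
    proof (rule ccontr)
      assume "\<not> K \<le> (LEAST k. t < T (Suc k))"
      then have "T (Suc (LEAST k. t < T (Suc k))) \<le> T K" by (intro incseqD[OF mono]) simp
      with L t show False by simp
    qed
    then show ?thesis by (rule K)
  qed
  then show ?thesis unfolding eventually_at_top_linorder by blast
qed


theorem theorem1:
  fixes M :: "'a measure"
    and lam :: "'n::finite \<Rightarrow> real"
    and mu :: "'n \<Rightarrow> ('n \<Rightarrow> nat) \<Rightarrow> real"
    and E :: "nat \<Rightarrow> 'n + 'n \<Rightarrow> 'a \<Rightarrow> real"
    and x0 :: "'n \<Rightarrow> nat"
  assumes "prob_space M"
    and "CARD('n) \<ge> 2"
    and lam_pos: "\<And>i. 0 < lam i"
    and mu_nonneg: "\<And>i x. 0 \<le> mu i x"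
    and mu_bounded: "\<exists>B. \<forall>i x. mu i x \<le> B"
    and homog_lam: "\<And>i j. lam i = lam j"
    and homog_mu: "\<And>\<pi> i x. bij \<pi> \<Longrightarrow> mu (\<pi> i) (x \<circ> inv \<pi>) = mu i x"
    and clocks_indep: "prob_space.indep_vars M (\<lambda>_. borel) (\<lambda>(k, e). E k e) UNIV"
    and clocks_exp: "\<And>k e. distributed M lborel (E k e) (exponential_density 1)"
    and overload: "\<exists>i. ereal (lam i) >
          limsup (\<lambda>n::nat. SUP x \<in> {x. x i = n}. ereal (mu i x))"
  shows "AE \<omega> in M. eventually (\<lambda>t. \<forall>i. 0 < queue_process lam mu x0 E t \<omega> i) at_top"
proof -
  interpret queue_clocks lam mu M E
    by (intro queue_clocks.intro queue_rates.intro queue_clocks_axioms.intro)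
       (use assms in auto)
  obtain B where B: "\<And>i x. mu i x \<le> B" using mu_bounded by blast
  define R where "R = Max (range lam) + max B 0"
  have R: "\<And>y e. rate y e \<le> R" unfolding R_def by (rule rate_bounded[OF B])
  have R_pos: "0 < R" using R[of x0 "Inl undefined"] lam_pos[of undefined] by (simp add: ev_rate_def)
  have nonempty: "AE \<omega> in M. eventually (\<lambda>n. jstate x0 n \<omega> j \<noteq> 0) sequentially" for j
    using overload_transfer[OF lam_pos homog_lam homog_mu overload, of j]
    by (metis overloaded_eventually_nonempty B R)
  have "AE \<omega> in M. (\<forall>j. eventually (\<lambda>n. jstate x0 n \<omega> j \<noteq> 0) sequentially)
      \<and> (\<forall>m::nat. eventually (\<lambda>n. real m < jtime x0 n \<omega>) sequentially)
      \<and> (\<forall>k e. 0 < E k e \<omega>)"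
    using nonempty jtime_unbounded[OF R R_pos, of x0] clocks_pos_AE by (simp add: AE_all_countable)
  then show ?thesis
  proof eventually_elim
    case (elim \<omega>)
    then have "eventually (\<lambda>n. \<forall>i. 0 < jstate x0 n \<omega> i) sequentially"
      by (simp add: eventually_all_finite)
    with elim show ?case
      unfolding queue_process_def jump_time_path jump_chain_path jstate_def[symmetric] jtime_def[symmetric]
      by (intro eventually_piecewise_constant) (auto simp: jtime_def intro: path_time_mono)
  qed
qed

end
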